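(* Let $n$ be a positive integer and let $w_1 \le w_2 \le \dots \le w_m$ be a feasible partition of $n$. Then $w_1 = 1$.
   Context: For a positive integer $n$, call a multiset of positive integers $\{w_1,\dots,w_k\}$ with $w_1+\dots+w_k=n$ a weighing partition of $n$ if every integer $\ell$ with $1\le \ell\le n$ can be written as $\ell=\sum_{j=1}^k u_j w_j$ with each $u_j\in\{-1,0,1\}$; this models weighing $\ell$ kg of goods in one weighing on a two-pan balance, with weights allowed on both pans. Let $m=m(n)$ be the minimum number of parts of a weighing partition of $n$. A feasible partition of $n$ is a weighing partition of $n$ with exactly $m$ parts, written in nondecreasing order $w_1\le w_2\le\dots\le w_m$. *)

theory Defs
  imports Main "HOL-Library.Multiset"
begin

definition signed_representable :: "nat list \<Rightarrow> int \<Rightarrow> bool" where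
  "signed_representable ws l \<longleftrightarrow>
     (\<exists>u :: nat \<Rightarrow> int. (\<forall>j < length ws. u j \<in> {-1, 0, 1}) \<and>
        l = (\<Sum>j<length ws. u j * int (ws ! j)))"

definition weighing_partition :: "nat \<Rightarrow> nat multiset \<Rightarrow> bool" where
  "weighing_partition n W \<longleftrightarrow>
     (\<forall>w \<in># W. w > 0) \<and> sum_mset W = n \<and>
     (\<forall>l::nat. 1 \<le> l \<and> l \<le> n \<longrightarrow> signed_representable (sorted_list_of_multiset W) (int l))"

definition min_parts :: "nat \<Rightarrow> nat" where
  "min_parts n = (LEAST k. \<exists>W. weighing_partition n W \<and> size W = k)"

definition feasible_partition :: "nat \<Rightarrow> nat multiset \<Rightarrow> bool" where
  "feasible_partition n W \<longleftrightarrow> weighing_partition n W \<and> size W = min_parts n"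

end

theory Submission
  imports Defs
begin

text \<open>Subtracting a signed representation of n - 1 from the sum n of all parts
  writes 1 as a sum of terms (1 - u j) * w j with nonnegative integer
  coefficients, so a single term equals 1 and its part is 1.\<close>

lemma signed_representable_0: "signed_representable ws 0"
  unfolding signed_representable_def by (intro exI[of _ "\<lambda>_. 0"]) simp

lemma one_mem_if_signed_representable_sum_minus_one:
  assumes rep: "signed_representable ws (int (sum_list ws) - 1)"
  shows "1 \<in> set ws"
proof -
  obtain u where u: "\<forall>j<length ws. u j \<in> {-1, 0, 1}"
    and eq: "int (sum_list ws) - 1 = (\<Sum>j<length ws. u j * int (ws ! j))"
    using rep unfolding signed_representable_def by blast
  define t where "t j = (1 - u j) * int (ws ! j)" for j
  have "int (sum_list ws) = (\<Sum>j<length ws. int (ws ! j))"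
    by (simp add: sum_list_sum_nth atLeast0LessThan flip: of_nat_sum)
  with eq have sum_t: "(\<Sum>j<length ws. t j) = 1"
    by (simp add: t_def sum_subtractf left_diff_distrib)
  have t_nonneg: "t j \<ge> 0" if "j < length ws" for j
    using u that by (auto simp: t_def)
  obtain j where j: "j < length ws" and "t j \<noteq> 0"
    using sum_t by (metis (mono_tags, lifting) lessThan_iff sum.neutral zero_neq_one)
  with t_nonneg have "t j > 0" by force
  moreover have "t j \<le> 1"
    using sum_t member_le_sum[of j "{..<length ws}" t] j t_nonneg by simp
  ultimately have "(1 - u j) * int (ws ! j) = 1" by (simp add: t_def)
  then have "ws ! j = 1"
    using u j by auto
  with j show ?thesis by (metis nth_mem)
qed

lemma weighing_partition_one_mem:
  assumes "weighing_partition n W" and "n > 0"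
  shows "1 \<in># W"
proof -
  let ?ws = "sorted_list_of_multiset W"
  have sum: "sum_list ?ws = n"
    and rep: "\<And>l. 1 \<le> l \<Longrightarrow> l \<le> n \<Longrightarrow> signed_representable ?ws (int l)"
    using assms(1) unfolding weighing_partition_def
    by (auto simp flip: sum_mset_sum_list)
  have "signed_representable ?ws (int n - 1)"
  proof (cases "n = 1")
    case True
    then show ?thesis using signed_representable_0 by simp
  next
    case False
    with assms(2) rep[of "n - 1"] show ?thesis by (simp add: of_nat_diff)
  qed
  with sum have "1 \<in> set ?ws"
    using one_mem_if_signed_representable_sum_minus_one by blast
  then show ?thesis by simp
qed

lemma sorted_nth_0_eq_one:
  assumes "sorted ws" and "1 \<in> set ws" and "\<forall>w\<in>set ws. w > 0"
  shows "ws ! 0 = (1::nat)"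
proof -
  obtain i where i: "i < length ws" "ws ! i = 1"
    using assms(2) by (meson in_set_conv_nth)
  have "ws ! 0 \<in> set ws" using i(1) by (intro nth_mem) linarith
  with assms(3) have "ws ! 0 > 0" by blast
  moreover have "ws ! 0 \<le> ws ! i" using assms(1) i(1) by (intro sorted_nth_mono) auto
  ultimately show ?thesis using i(2) by simp
qed

theorem theorem1:
  fixes n :: nat and ws :: "nat list"
  assumes "n > 0"
    and "sorted ws"
    and "feasible_partition n (mset ws)"
  shows "ws ! 0 = 1"
proof -
  have wp: "weighing_partition n (mset ws)"
    using assms(3) unfolding feasible_partition_def by blast
  then have "1 \<in> set ws"
    using weighing_partition_one_mem assms(1) by fastforce
  moreover have "\<forall>w\<in>set ws. w > 0"
    using wp unfolding weighing_partition_def by simp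
  ultimately show ?thesis using sorted_nth_0_eq_one assms(2) by blast
qed

end
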